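(* Let $(X,T)$ be a minimal topological dynamical system. Then $(X,T)$ is strongly $\mathcal{F}_{ip}$-sensitive if and only if there is $\delta>0$ such that for every non-empty open subset $U$ of $X$ there are $x\in U$ and $y\in X$ with $d(x,y)>\delta$ and $x$ strongly proximal to $y$.
   Context: A topological dynamical system: compact metric space $(X,d)$ with continuous surjection $T$; minimal means every orbit is dense. $x$ is strongly proximal to $y$ if $(y,y)$ belongs to the $\omega$-limit set of $(x,y)$ under $T\times T$, i.e. there are $n_k\to\infty$ with $T^{n_k}x\to y$ and $T^{n_k}y\to y$. $\mathcal{F}_{ip}$ is the family of subsets of $\mathbb{Z}_+$ containing some $FS((p_i)_{i=1}^\infty)=\{\sum_{i\in\alpha}p_i:\alpha$ finite nonempty$\}$, $p_i\in\mathbb{N}$. $(X,T)$ is strongly $\mathcal{F}_{ip}$-sensitive if there is $\delta>0$ such that for each nonempty open $U$ there are $x,y\in U$ with $\{n\in\mathbb{Z}_+:d(T^nx,T^ny)>\delta\}\in\mathcal{F}_{ip}$. *)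

theory Defs
  imports "HOL-Analysis.Analysis"
begin

definition tds :: "'a::metric_space set \<Rightarrow> ('a \<Rightarrow> 'a) \<Rightarrow> bool" where
  "tds X T \<longleftrightarrow> X \<noteq> {} \<and> compact X \<and> continuous_on X T \<and> T ` X = X"

definition minimal_tds :: "'a::metric_space set \<Rightarrow> ('a \<Rightarrow> 'a) \<Rightarrow> bool" where
  "minimal_tds X T \<longleftrightarrow> tds X T \<and>
     (\<forall>x\<in>X. X \<subseteq> closure {(T ^^ n) x | n. True})"

definition FS :: "(nat \<Rightarrow> nat) \<Rightarrow> nat set" where
  "FS p = {sum p \<alpha> | \<alpha>. finite \<alpha> \<and> \<alpha> \<noteq> {}}"

definition F_ip :: "nat set set" where
  "F_ip = {S. \<exists>p. (\<forall>i. p i > 0) \<and> FS p \<subseteq> S}"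

definition strongly_proximal :: "('a::metric_space \<Rightarrow> 'a) \<Rightarrow> 'a \<Rightarrow> 'a \<Rightarrow> bool" where
  "strongly_proximal T x y \<longleftrightarrow>
     (\<exists>n::nat \<Rightarrow> nat. strict_mono n \<and>
        ((\<lambda>k. (T ^^ n k) x) \<longlongrightarrow> y) sequentially \<and>
        ((\<lambda>k. (T ^^ n k) y) \<longlongrightarrow> y) sequentially)"

definition strongly_F_ip_sensitive :: "'a::metric_space set \<Rightarrow> ('a \<Rightarrow> 'a) \<Rightarrow> bool" where
  "strongly_F_ip_sensitive X T \<longleftrightarrow>
     (\<exists>\<delta>>0. \<forall>U. openin (top_of_set X) U \<and> U \<noteq> {} \<longrightarrow>
        (\<exists>x\<in>U. \<exists>y\<in>U. {n. dist ((T ^^ n) x) ((T ^^ n) y) > \<delta>} \<in> F_ip))"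

end

theory Submission
  imports Defs
begin

text \<open>
  Suppose \<open>x, y\<close> are close but \<open>T\<^sup>n x\<close> and \<open>T\<^sup>n y\<close> are \<open>\<delta>\<close>-apart for all \<open>n\<close> in an IP set
  \<open>FS(p)\<close>. The limit points in \<open>X\<^sup>X\<close> of \<open>T\<^sup>n\<close> along the tails of \<open>FS(p)\<close> form a compact
  semigroup, which contains an idempotent \<open>u\<close> (Ellis--Numakura). Every point \<open>z\<close> is strongly
  proximal to \<open>u z\<close>, and \<open>d(u x, u y) \<ge> \<delta>\<close>, so \<open>x\<close> or \<open>y\<close> is far from its image under \<open>u\<close>.

  Conversely, if \<open>x\<close> is strongly proximal to \<open>y\<close> and \<open>d(x, y) > \<delta>\<close>, the times at which both
  \<open>T\<^sup>n x\<close> and \<open>T\<^sup>n y\<close> are near \<open>y\<close> contain an IP set, built greedily. By minimality some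
  \<open>T\<^sup>q y\<close> lies near \<open>x\<close>; along that IP set \<open>T\<^sup>n x\<close> stays near \<open>y\<close> while \<open>T\<^sup>n (T\<^sup>q y)\<close>
  stays near \<open>T\<^sup>q y\<close>, so \<open>x\<close> and \<open>T\<^sup>q y\<close> are separated along it.
\<close>

lemma funpow_mapsto: "T ` X \<subseteq> X \<Longrightarrow> x \<in> X \<Longrightarrow> (T ^^ n) x \<in> X"
  by (induction n) auto

lemma funpow_commute_apply: "(T ^^ m) ((T ^^ n) x) = (T ^^ n) ((T ^^ m) x)"
  by (metis comp_apply funpow_add add.commute)

lemma continuous_on_funpow:
  assumes "continuous_on X T" "T ` X \<subseteq> X"
  shows "continuous_on X (T ^^ n)"
proof (induction n)
  case (Suc n)
  have "continuous_on X (\<lambda>z. T ((T ^^ n) z))"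
    by (rule continuous_on_compose2[OF assms(1) Suc]) (use funpow_mapsto[OF assms(2)] in auto)
  then show ?case by (simp add: comp_def)
qed (simp add: continuous_on_id)

lemma tendsto_funpow_shift:
  assumes "continuous_on X T" "T ` X \<subseteq> X" "z \<in> X" "y \<in> X"
    and "(\<lambda>k. (T ^^ r k) z) \<longlonglongrightarrow> y"
  shows "(\<lambda>k. (T ^^ (r k + s)) z) \<longlonglongrightarrow> (T ^^ s) y"
proof -
  have "(\<lambda>k. (T ^^ s) ((T ^^ r k) z)) \<longlonglongrightarrow> (T ^^ s) y"
    by (rule continuous_on_tendsto_compose[OF continuous_on_funpow[OF assms(1,2)] assms(5,4)])
       (use funpow_mapsto[OF assms(2,3)] in auto)
  then show ?thesis by (simp add: funpow_add add.commute)
qed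

lemma openin_subset_small:
  fixes X :: "'a::metric_space set"
  assumes "openin (top_of_set X) U" "U \<noteq> {}" "r > 0"
  obtains V where "openin (top_of_set X) V" "V \<noteq> {}" "V \<subseteq> U"
    "\<And>x y. x \<in> V \<Longrightarrow> y \<in> V \<Longrightarrow> dist x y < r"
proof -
  obtain u where u: "u \<in> U" using assms(2) by blast
  define V where "V = U \<inter> ball u (r/2)"
  have "dist x y < r" if "x \<in> V" "y \<in> V" for x y
  proof -
    have "dist u x < r/2" "dist u y < r/2" using that by (auto simp: V_def)
    then show ?thesis using dist_triangle3[of x y u] by linarith
  qed
  moreover have "openin (top_of_set X) V" using assms(1) by (simp add: V_def openin_Int_open)
  moreover have "V \<noteq> {}" "V \<subseteq> U" using u assms(3) by (auto simp: V_def)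
  ultimately show thesis using that by blast
qed

lemma minimal_tds_orbit_meets_openin:
  assumes "minimal_tds X T" "y \<in> X" "openin (top_of_set X) V" "V \<noteq> {}"
  obtains q where "(T ^^ q) y \<in> V"
proof -
  obtain W where W: "open W" "V = X \<inter> W" using assms(3) by (auto simp: openin_open)
  obtain v where v: "v \<in> V" using assms(4) by blast
  have "v \<in> closure {(T ^^ n) y | n. True}"
    using assms(1,2) v W by (auto simp: minimal_tds_def)
  then obtain q where "(T ^^ q) y \<in> W"
    using W v open_Int_closure_eq_empty by blast
  moreover have "(T ^^ q) y \<in> X"
    using assms(1,2) by (intro funpow_mapsto) (auto simp: minimal_tds_def tds_def)
  ultimately show thesis using that W by blast
qed

section \<open>Strong proximality and IP sets of return times\<close>

lemma F_ip_mono: "A \<in> F_ip \<Longrightarrow> A \<subseteq> B \<Longrightarrow> B \<in> F_ip"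
  unfolding F_ip_def by blast

lemma sum_mem_subset_sums:
  assumes A_0: "A 0 = {0}" and A_Suc: "\<And>j. A (Suc j) = A j \<union> (+) (p j) ` A j"
    and "\<alpha> \<subseteq> {..<j}"
  shows "sum p \<alpha> \<in> A j"
  using assms(3)
proof (induction j arbitrary: \<alpha>)
  case (Suc j)
  show ?case
  proof (cases "j \<in> \<alpha>")
    case False
    then have "\<alpha> \<subseteq> {..<j}" using Suc.prems by (auto simp: less_Suc_eq)
    then show ?thesis using Suc.IH by (simp add: A_Suc)
  next
    case True
    have "finite \<alpha>" using Suc.prems finite_subset by blast
    then have "sum p \<alpha> = p j + sum p (\<alpha> - {j})" using True by (simp add: sum.remove)
    moreover have "\<alpha> - {j} \<subseteq> {..<j}" using Suc.prems by (auto simp: less_Suc_eq)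
    ultimately show ?thesis using Suc.IH by (simp add: A_Suc)
  qed
qed (simp add: A_0)

lemma F_ip_greedy:
  assumes step: "\<And>A. finite A \<Longrightarrow> \<forall>s\<in>A - {0}. P s \<Longrightarrow> \<exists>n>0. \<forall>s\<in>A. P (n + s)"
  shows "{s. P s} \<in> F_ip"
proof -
  define nxt where "nxt A = (SOME n. n > 0 \<and> (\<forall>s\<in>A. P (n + s)))" for A
  have nxt: "nxt A > 0 \<and> (\<forall>s\<in>A. P (nxt A + s))" if "finite A" "\<forall>s\<in>A - {0}. P s" for A
    unfolding nxt_def using someI_ex[OF step[OF that]] .
  \<comment> \<open>\<open>A j\<close> is the set of sums of subsets of \<open>{p 0, \<dots>, p (j - 1)}\<close>, including the empty sum.\<close>
  define A where "A = rec_nat {0} (\<lambda>_ B. B \<union> (+) (nxt B) ` B)"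
  define p where "p j = nxt (A j)" for j
  have A_0: "A 0 = {0}" and A_Suc: "A (Suc j) = A j \<union> (+) (p j) ` A j" for j
    by (simp_all add: A_def p_def)
  have A_good: "finite (A j) \<and> (\<forall>s\<in>A j - {0}. P s)" for j
  proof (induction j)
    case (Suc j)
    have "nxt (A j) > 0 \<and> (\<forall>s\<in>A j. P (nxt (A j) + s))"
      using nxt[OF conjunct1[OF Suc.IH] conjunct2[OF Suc.IH]] .
    then show ?case using Suc.IH by (auto simp: A_Suc p_def)
  qed (simp add: A_0)
  have p_pos: "p j > 0" for j
    using nxt A_good unfolding p_def by blast
  have "FS p \<subseteq> {s. P s}"
  proof
    fix s assume "s \<in> FS p"
    then obtain \<alpha> where \<alpha>: "s = sum p \<alpha>" "finite \<alpha>" "\<alpha> \<noteq> {}" by (auto simp: FS_def)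
    then have "\<alpha> \<subseteq> {..<Suc (Max \<alpha>)}" by (auto simp: less_Suc_eq_le)
    then have "s \<in> A (Suc (Max \<alpha>))" using sum_mem_subset_sums[OF A_0 A_Suc] \<alpha>(1) by blast
    moreover have "s > 0" using \<alpha> p_pos by (simp add: sum_pos)
    ultimately show "s \<in> {s. P s}" using A_good by blast
  qed
  then show ?thesis using p_pos by (auto simp: F_ip_def)
qed

lemma frequently_small_imp_subseq_tendsto_0:
  fixes g :: "nat \<Rightarrow> real"
  assumes "\<And>e N. e > 0 \<Longrightarrow> \<exists>n\<ge>N. \<bar>g n\<bar> < e"
  obtains r where "strict_mono r" "(\<lambda>k. g (r k)) \<longlonglongrightarrow> 0"
proof
  define \<sigma> where "\<sigma> k N = (SOME n. n \<ge> N \<and> \<bar>g n\<bar> < inverse (real (Suc k)))" for k N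
  have \<sigma>: "\<sigma> k N \<ge> N \<and> \<bar>g (\<sigma> k N)\<bar> < inverse (real (Suc k))" for k N
    unfolding \<sigma>_def by (rule someI_ex) (use assms in simp)
  define r where "r = rec_nat (\<sigma> 0 0) (\<lambda>k m. \<sigma> (Suc k) (Suc m))"
  have r_eq: "r k = \<sigma> k (case k of 0 \<Rightarrow> 0 | Suc j \<Rightarrow> Suc (r j))" for k
    by (cases k) (simp_all add: r_def)
  show "strict_mono r"
    unfolding strict_mono_Suc_iff using \<sigma> r_eq by (metis Suc_le_lessD nat.case(2))
  have "\<bar>g (r k)\<bar> < inverse (real (Suc k))" for k
    by (metis \<sigma> r_eq)
  then show "(\<lambda>k. g (r k)) \<longlonglongrightarrow> 0"
    by (intro Lim_null_comparison[OF _ LIMSEQ_inverse_real_of_nat] always_eventually)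
       (simp add: less_imp_le)
qed

lemma strongly_proximalI:
  assumes "\<And>e N. e > 0 \<Longrightarrow> \<exists>n\<ge>N. dist ((T ^^ n) x) y < e \<and> dist ((T ^^ n) y) y < e"
  shows "strongly_proximal T x y"
proof -
  define g where "g n = dist ((T ^^ n) x) y + dist ((T ^^ n) y) y" for n
  have small: "\<exists>n\<ge>N. \<bar>g n\<bar> < e" if e: "e > 0" for e N
  proof -
    obtain n where "n \<ge> N" "dist ((T ^^ n) x) y < e/2" "dist ((T ^^ n) y) y < e/2"
      using assms[of "e/2" N] e by auto
    then show ?thesis by (intro exI[of _ n]) (simp add: g_def)
  qed
  obtain r where r: "strict_mono r" "(\<lambda>k. g (r k)) \<longlonglongrightarrow> 0"
    using frequently_small_imp_subseq_tendsto_0[OF small] .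
  have conv: "(\<lambda>k. (T ^^ r k) x) \<longlonglongrightarrow> y" "(\<lambda>k. (T ^^ r k) y) \<longlonglongrightarrow> y"
    by (rule tendsto_dist_iff[THEN iffD2], rule tendsto_sandwich[OF _ _ tendsto_const r(2)];
        simp add: g_def)+
  show ?thesis
    unfolding strongly_proximal_def by (intro exI[of _ r] conjI r(1) conv)
qed

lemma strongly_proximal_returns_F_ip:
  assumes cont: "continuous_on X T" and TX: "T ` X \<subseteq> X" and xy: "x \<in> X" "y \<in> X"
    and sp: "strongly_proximal T x y" and e: "e > 0"
  shows "{s. dist ((T ^^ s) x) y < e \<and> dist ((T ^^ s) y) y < e} \<in> F_ip"
proof (rule F_ip_greedy)
  obtain r where r: "strict_mono r" "(\<lambda>k. (T ^^ r k) x) \<longlonglongrightarrow> y" "(\<lambda>k. (T ^^ r k) y) \<longlonglongrightarrow> y"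
    using sp unfolding strongly_proximal_def by blast
  fix A :: "nat set"
  assume A: "finite A" "\<forall>s\<in>A - {0}. dist ((T ^^ s) x) y < e \<and> dist ((T ^^ s) y) y < e"
  have "eventually (\<lambda>k. dist ((T ^^ (r k + s)) x) y < e \<and> dist ((T ^^ (r k + s)) y) y < e) sequentially"
    if "s \<in> A" for s
  proof -
    have close: "dist ((T ^^ s) y) y < e" using A that e by (cases "s = 0") auto
    have "eventually (\<lambda>k. dist ((T ^^ (r k + s)) z) y < e) sequentially"
      if z: "z \<in> X" "(\<lambda>k. (T ^^ r k) z) \<longlonglongrightarrow> y" for z
      using order_tendstoD(2)[OF tendsto_dist[OF tendsto_funpow_shift[OF cont TX z(1) xy(2) z(2)]
            tendsto_const] close] .
    from this[OF xy(1) r(2)] this[OF xy(2) r(3)] show ?thesis by (rule eventually_conj)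
  qed
  then have "eventually (\<lambda>k. \<forall>s\<in>A. dist ((T ^^ (r k + s)) x) y < e \<and> dist ((T ^^ (r k + s)) y) y < e)
      sequentially"
    using A(1) by (simp add: eventually_ball_finite)
  moreover have "eventually (\<lambda>k. r k > 0) sequentially"
  proof (rule eventually_sequentiallyI)
    fix k :: nat assume "1 \<le> k"
    then show "r k > 0" using seq_suble[OF r(1), of k] by linarith
  qed
  ultimately have "eventually (\<lambda>k. r k > 0 \<and>
      (\<forall>s\<in>A. dist ((T ^^ (r k + s)) x) y < e \<and> dist ((T ^^ (r k + s)) y) y < e)) sequentially"
    by (simp add: eventually_conj_iff)
  then obtain N where "\<forall>k\<ge>N. r k > 0 \<and>
      (\<forall>s\<in>A. dist ((T ^^ (r k + s)) x) y < e \<and> dist ((T ^^ (r k + s)) y) y < e)"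
    unfolding eventually_sequentially ..
  then show "\<exists>n>0. \<forall>s\<in>A. dist ((T ^^ (n + s)) x) y < e \<and> dist ((T ^^ (n + s)) y) y < e"
    by blast
qed

section \<open>Proximal pairs give strong IP-sensitivity\<close>

lemma F_ip_separation_from_proximal_return:
  assumes cont: "continuous_on X T" and TX: "T ` X \<subseteq> X" and xy: "x \<in> X" "y \<in> X"
    and sp: "strongly_proximal T x y" and \<epsilon>: "\<epsilon> > 0"
    and far: "dist y ((T ^^ q) y) > 3 * \<epsilon>"
  shows "{n. dist ((T ^^ n) x) ((T ^^ n) ((T ^^ q) y)) > \<epsilon>} \<in> F_ip"
proof -
  have "\<exists>\<eta>>0. \<forall>z\<in>X. dist z y < \<eta> \<longrightarrow> dist ((T ^^ q) z) ((T ^^ q) y) < \<epsilon>"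
    using continuous_on_funpow[OF cont TX, of q] xy(2) \<epsilon> unfolding continuous_on_iff by blast
  then obtain \<eta> where \<eta>: "\<eta> > 0" "\<And>z. z \<in> X \<Longrightarrow> dist z y < \<eta> \<Longrightarrow> dist ((T ^^ q) z) ((T ^^ q) y) < \<epsilon>"
    by blast
  define e where "e = min \<eta> \<epsilon>"
  have returns_separate: "{s. dist ((T ^^ s) x) y < e \<and> dist ((T ^^ s) y) y < e}
      \<subseteq> {n. dist ((T ^^ n) x) ((T ^^ n) ((T ^^ q) y)) > \<epsilon>}"
  proof safe
    fix s assume x_close: "dist ((T ^^ s) x) y < e" and y_close: "dist ((T ^^ s) y) y < e"
    let ?b = "(T ^^ q) y"
    have "dist ((T ^^ q) ((T ^^ s) y)) ?b < \<epsilon>"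
      using \<eta>(2)[OF funpow_mapsto[OF TX xy(2)]] y_close by (simp add: e_def)
    then have b_close: "dist ((T ^^ s) ?b) ?b < \<epsilon>"
      by (simp only: funpow_commute_apply[where m=s and n=q])
    have "dist y ?b \<le> dist y ((T ^^ s) x) + dist ((T ^^ s) x) ((T ^^ s) ?b) + dist ((T ^^ s) ?b) ?b"
      using dist_triangle[of y ?b "(T ^^ s) x"] dist_triangle[of "(T ^^ s) x" ?b "(T ^^ s) ?b"]
      by linarith
    then show "dist ((T ^^ s) x) ((T ^^ s) ?b) > \<epsilon>"
      using far x_close b_close by (simp add: e_def dist_commute)
  qed
  have "e > 0" using \<eta>(1) \<epsilon> by (simp add: e_def)
  then have "{s. dist ((T ^^ s) x) y < e \<and> dist ((T ^^ s) y) y < e} \<in> F_ip"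
    by (rule strongly_proximal_returns_F_ip[OF cont TX xy sp])
  then show ?thesis using returns_separate by (rule F_ip_mono)
qed

lemma strongly_F_ip_sensitiveI:
  assumes minimal: "minimal_tds X T" and \<delta>: "\<delta> > 0"
    and proximal: "\<And>U. openin (top_of_set X) U \<Longrightarrow> U \<noteq> {} \<Longrightarrow>
      \<exists>x\<in>U. \<exists>y\<in>X. dist x y > \<delta> \<and> strongly_proximal T x y"
  shows "strongly_F_ip_sensitive X T"
  unfolding strongly_F_ip_sensitive_def
proof (intro exI[of _ "\<delta>/4"] conjI allI impI)
  have cont: "continuous_on X T" and TX: "T ` X \<subseteq> X"
    using minimal by (auto simp: minimal_tds_def tds_def)
  show "\<delta>/4 > 0" using \<delta> by simp
  fix U assume "openin (top_of_set X) U \<and> U \<noteq> {}"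
  then obtain V where V: "openin (top_of_set X) V" "V \<noteq> {}" "V \<subseteq> U"
    and small: "\<And>x y. x \<in> V \<Longrightarrow> y \<in> V \<Longrightarrow> dist x y < \<delta>/4"
    using openin_subset_small[of X U "\<delta>/4"] \<delta> by auto
  obtain x y where x: "x \<in> V" and y: "y \<in> X" "dist x y > \<delta>" "strongly_proximal T x y"
    using proximal[OF V(1,2)] by blast
  obtain q where q: "(T ^^ q) y \<in> V"
    using minimal_tds_orbit_meets_openin[OF minimal y(1) V(1,2)] .
  have "dist y ((T ^^ q) y) > 3 * (\<delta>/4)"
    using small[OF x q] y(2) dist_triangle[of x y "(T ^^ q) y"] by (simp add: dist_commute)
  moreover have "x \<in> X" using x V(1) openin_imp_subset by blast
  ultimately have "{n. dist ((T ^^ n) x) ((T ^^ n) ((T ^^ q) y)) > \<delta>/4} \<in> F_ip"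
    by (intro F_ip_separation_from_proximal_return[OF cont TX _ y(1) y(3)]) (use \<delta> in auto)
  then show "\<exists>x\<in>U. \<exists>y\<in>U. {n. dist ((T ^^ n) x) ((T ^^ n) y) > \<delta>/4} \<in> F_ip"
    using x q V(3) by blast
qed

section \<open>Idempotents in compact semigroups of maps\<close>

lemma Hausdorff_space_fun: "Hausdorff_space (euclidean :: ('a \<Rightarrow> 'b::t2_space) topology)"
proof -
  have "Hausdorff_space (euclidean :: 'b topology)"
    unfolding Hausdorff_space_def disjnt_def using hausdorff by fastforce
  then show ?thesis
    by (metis Hausdorff_space_product_topology euclidean_product_topology)
qed

lemma compact_imp_closed_fun: "compact (S :: ('a \<Rightarrow> 'b::t2_space) set) \<Longrightarrow> closed S"
  by (metis Hausdorff_space_fun closed_closedin compactin_euclidean_iff compactin_imp_closedin)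

lemma closed_singleton_fun: "closed {u :: 'a \<Rightarrow> 'b::t2_space}"
  by (metis Hausdorff_space_fun closed_closedin closedin_Hausdorff_singleton UNIV_I topspace_euclidean)

lemma continuous_on_comp_right: "continuous_on S (\<lambda>f :: 'a \<Rightarrow> 'b::topological_space. f \<circ> g)"
  by (intro continuous_on_coordinatewise_then_product)
     (simp add: comp_def, rule continuous_on_subset[OF continuous_on_product_coordinates], simp)

lemma compact_Inter_chain_nonempty:
  assumes "compact K" "\<F> \<noteq> {}" "\<And>S. S \<in> \<F> \<Longrightarrow> closed S \<and> S \<noteq> {} \<and> S \<subseteq> K"
    and chain: "\<And>S T. S \<in> \<F> \<Longrightarrow> T \<in> \<F> \<Longrightarrow> S \<subseteq> T \<or> T \<subseteq> S"
  shows "\<Inter>\<F> \<noteq> {}"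
proof -
  have "K \<inter> \<Inter>\<F> \<noteq> {}"
  proof (rule compact_imp_fip[OF assms(1)])
    show "closed S" if "S \<in> \<F>" for S using assms(3)[OF that] by blast
  next
    fix \<G> assume \<G>: "finite \<G>" "\<G> \<subseteq> \<F>"
    show "K \<inter> \<Inter>\<G> \<noteq> {}"
    proof (cases "\<G> = {}")
      case True
      then show ?thesis using assms(2,3) by auto
    next
      case False
      have "subset.chain \<F> \<G>" using \<G>(2) chain by (auto simp: subset_chain_def)
      then have "\<Inter>\<G> \<in> \<G>" using Inter_in_chain[OF \<G>(1) False] by blast
      then show ?thesis using \<G>(2) assms(3) by blast
    qed
  qed
  then show ?thesis by blast
qed

definition comp_closed :: "('a \<Rightarrow> 'a) set \<Rightarrow> bool" where
  "comp_closed S \<longleftrightarrow> (\<forall>f\<in>S. \<forall>g\<in>S. f \<circ> g \<in> S)"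

lemma exists_minimal_closed_comp_closed:
  fixes P :: "('a \<Rightarrow> 'a::t2_space) set"
  assumes "compact P" "P \<noteq> {}" "comp_closed P"
  obtains A where "A \<subseteq> P" "A \<noteq> {}" "closed A" "comp_closed A"
    "\<And>B. B \<subseteq> A \<Longrightarrow> B \<noteq> {} \<Longrightarrow> closed B \<Longrightarrow> comp_closed B \<Longrightarrow> B = A"
proof -
  define \<A> where "\<A> = {A. A \<subseteq> P \<and> A \<noteq> {} \<and> closed A \<and> comp_closed A}"
  have "\<exists>M\<in>uminus ` \<A>. \<forall>Y\<in>uminus ` \<A>. M \<subseteq> Y \<longrightarrow> Y = M"
  proof (rule subset_Zorn_nonempty)
    have "P \<in> \<A>" using assms by (simp add: \<A>_def compact_imp_closed_fun)
    then show "uminus ` \<A> \<noteq> {}" by blast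
  next
    fix \<C> assume \<C>: "\<C> \<noteq> {}" "subset.chain (uminus ` \<A>) \<C>"
    define \<D> where "\<D> = uminus ` \<C>"
    have "\<C> \<subseteq> uminus ` \<A>" using \<C>(2) by (simp add: subset_chain_def)
    then have \<D>\<A>: "\<D> \<subseteq> \<A>" unfolding \<D>_def by auto
    have \<D>_ne: "\<D> \<noteq> {}" using \<C>(1) by (simp add: \<D>_def)
    have "\<Inter>\<D> \<noteq> {}"
    proof (rule compact_Inter_chain_nonempty[OF assms(1) \<D>_ne])
      show "closed S \<and> S \<noteq> {} \<and> S \<subseteq> P" if "S \<in> \<D>" for S
        using that \<D>\<A> by (auto simp: \<A>_def)
      show "S \<subseteq> T \<or> T \<subseteq> S" if "S \<in> \<D>" "T \<in> \<D>" for S T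
        using that \<C>(2) unfolding \<D>_def subset_chain_def by (metis Compl_subset_Compl_iff imageE)
    qed
    moreover obtain S where "S \<in> \<D>" using \<D>_ne by blast
    then have "\<Inter>\<D> \<subseteq> P" using \<D>\<A> by (intro Inf_lower2[of S]) (auto simp: \<A>_def)
    moreover have "closed (\<Inter>\<D>)" "comp_closed (\<Inter>\<D>)"
      using \<D>\<A> by (auto simp: \<A>_def comp_closed_def)
    ultimately have "\<Inter>\<D> \<in> \<A>" by (simp add: \<A>_def)
    moreover have "\<Union>\<C> = - \<Inter>\<D>" by (auto simp: \<D>_def)
    ultimately show "\<Union>\<C> \<in> uminus ` \<A>" by blast
  qed
  then obtain A where A: "A \<in> \<A>" and maximal: "\<forall>Y\<in>uminus ` \<A>. - A \<subseteq> Y \<longrightarrow> Y = - A"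
    by blast
  have minimal: "B = A" if "B \<subseteq> A" "B \<noteq> {}" "closed B" "comp_closed B" for B
  proof -
    have "B \<in> \<A>" using that A by (auto simp: \<A>_def)
    then show ?thesis
      using maximal \<open>B \<subseteq> A\<close> by (metis Compl_subset_Compl_iff double_complement image_eqI)
  qed
  show thesis
    by (rule that[OF _ _ _ _ minimal]) (use A in \<open>auto simp: \<A>_def\<close>)
qed

lemma comp_closed_image_comp_right:
  assumes "comp_closed A" "u \<in> A"
  shows "comp_closed ((\<lambda>f. f \<circ> u) ` A)"
  unfolding comp_closed_def
proof (intro ballI)
  fix f g assume "f \<in> (\<lambda>f. f \<circ> u) ` A" "g \<in> (\<lambda>f. f \<circ> u) ` A"
  then obtain f' g' where fg: "f' \<in> A" "g' \<in> A" "f = f' \<circ> u" "g = g' \<circ> u" by blast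
  show "f \<circ> g \<in> (\<lambda>f. f \<circ> u) ` A"
  proof (rule image_eqI)
    show "f \<circ> g = (f' \<circ> u \<circ> g') \<circ> u" using fg by (simp add: comp_assoc)
    show "f' \<circ> u \<circ> g' \<in> A" using assms fg by (simp add: comp_closed_def)
  qed
qed

text \<open>Ellis--Numakura: only right composition \<open>f \<mapsto> f \<circ> u\<close> has to be continuous, and in the
  product topology it always is.\<close>
lemma compact_comp_closed_has_idempotent:
  fixes P :: "('a \<Rightarrow> 'a::t2_space) set"
  assumes "compact P" "P \<noteq> {}" "comp_closed P"
  obtains u where "u \<in> P" "u \<circ> u = u"
proof -
  obtain A where A: "A \<subseteq> P" "A \<noteq> {}" "closed A" "comp_closed A"
    and minimal: "\<And>B. B \<subseteq> A \<Longrightarrow> B \<noteq> {} \<Longrightarrow> closed B \<Longrightarrow> comp_closed B \<Longrightarrow> B = A"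
    using exists_minimal_closed_comp_closed[OF assms] by blast
  obtain u where u: "u \<in> A" using A(2) by blast
  have compact_A: "compact A" using compact_Int_closed[OF assms(1) A(3)] A(1) by (simp add: Int_absorb1)
  have "(\<lambda>f. f \<circ> u) ` A = A"
  proof (rule minimal)
    show "(\<lambda>f. f \<circ> u) ` A \<subseteq> A" using A(4) u by (auto simp: comp_closed_def)
    show "(\<lambda>f. f \<circ> u) ` A \<noteq> {}" using A(2) by blast
    show "closed ((\<lambda>f. f \<circ> u) ` A)"
      by (intro compact_imp_closed_fun compact_continuous_image[OF continuous_on_comp_right compact_A])
    show "comp_closed ((\<lambda>f. f \<circ> u) ` A)" using comp_closed_image_comp_right[OF A(4) u] .
  qed
  then obtain v where v: "v \<in> A" "v \<circ> u = u" using u by (metis imageE)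
  have "{f \<in> A. f \<circ> u = u} = A"
  proof (rule minimal)
    show "closed {f \<in> A. f \<circ> u = u}"
      using closed_Int[OF A(3) closed_vimage[OF closed_singleton_fun continuous_on_comp_right, of u]]
      by (simp add: Collect_conj_eq vimage_def)
    show "comp_closed {f \<in> A. f \<circ> u = u}" using A(4) by (auto simp: comp_closed_def comp_assoc)
  qed (use v in auto)
  then show thesis using that u A(1) by blast
qed

section \<open>Idempotent IP limits and sensitivity\<close>

text \<open>The bound \<open>j \<le> sum p \<alpha>\<close> makes the elements of the tails tend to infinity, which the
  strictly increasing return times of strong proximality require.\<close>
definition IP_tail :: "(nat \<Rightarrow> nat) \<Rightarrow> nat \<Rightarrow> nat set" where
  "IP_tail p j = {sum p \<alpha> | \<alpha>. finite \<alpha> \<and> \<alpha> \<noteq> {} \<and> \<alpha> \<subseteq> {j..} \<and> j \<le> sum p \<alpha>}"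

lemma IP_tail_subset_FS: "IP_tail p j \<subseteq> FS p"
  unfolding IP_tail_def FS_def by blast

lemma IP_tail_ge: "s \<in> IP_tail p j \<Longrightarrow> j \<le> s"
  unfolding IP_tail_def by blast

lemma IP_tail_antimono:
  assumes "j \<le> k"
  shows "IP_tail p k \<subseteq> IP_tail p j"
proof
  fix s assume "s \<in> IP_tail p k"
  then obtain \<alpha> where \<alpha>: "s = sum p \<alpha>" "finite \<alpha>" "\<alpha> \<noteq> {}" "\<alpha> \<subseteq> {k..}" "k \<le> sum p \<alpha>"
    unfolding IP_tail_def by blast
  then have "\<alpha> \<subseteq> {j..}" "j \<le> sum p \<alpha>" using assms by auto
  with \<alpha> show "s \<in> IP_tail p j" unfolding IP_tail_def by blast
qed

lemma IP_tail_nonempty: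
  assumes "\<forall>i. p i > 0"
  shows "IP_tail p j \<noteq> {}"
proof -
  have "card {j..j+j} \<le> sum p {j..j+j}"
    using sum_mono[of "{j..j+j}" "\<lambda>_. 1::nat" p] assms by (simp add: Suc_le_eq)
  then have "sum p {j..j+j} \<in> IP_tail p j" unfolding IP_tail_def by force
  then show ?thesis by blast
qed

lemma IP_tail_add:
  assumes "s \<in> IP_tail p j"
  obtains N where "\<And>t. t \<in> IP_tail p N \<Longrightarrow> s + t \<in> IP_tail p j"
proof -
  obtain \<alpha> where \<alpha>: "s = sum p \<alpha>" "finite \<alpha>" "\<alpha> \<noteq> {}" "\<alpha> \<subseteq> {j..}" "j \<le> sum p \<alpha>"
    using assms unfolding IP_tail_def by blast
  have "s + t \<in> IP_tail p j" if t: "t \<in> IP_tail p (Suc (Max \<alpha>))" for t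
  proof -
    obtain \<beta> where \<beta>: "t = sum p \<beta>" "finite \<beta>" "\<beta> \<noteq> {}" "\<beta> \<subseteq> {Suc (Max \<alpha>)..}"
      using t unfolding IP_tail_def by blast
    have "\<alpha> \<inter> \<beta> = {}" using \<beta>(4) \<alpha>(2) Max_ge by fastforce
    then have "s + t = sum p (\<alpha> \<union> \<beta>)" using \<alpha> \<beta> by (simp add: sum.union_disjoint)
    moreover have "j \<le> Max \<alpha>" using \<alpha>(2,3,4) Max_in by blast
    then have "\<alpha> \<union> \<beta> \<subseteq> {j..}" using \<alpha>(4) \<beta>(4) by auto
    ultimately show ?thesis
      unfolding IP_tail_def using \<alpha> \<beta> by (intro CollectI exI[of _ "\<alpha> \<union> \<beta>"]) auto
  qed
  then show thesis by (rule that)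
qed

text \<open>The enveloping semigroup of \<open>(X, T)\<close> lives in \<open>X\<^sup>X\<close>; a map \<open>X \<rightarrow> X\<close> is encoded as a
  self-map of the whole type that is the identity outside \<open>X\<close>, so that composition and the
  product topology of \<open>'a \<Rightarrow> 'a\<close> can be used directly.\<close>
definition self_maps :: "'a set \<Rightarrow> ('a \<Rightarrow> 'a) set" where
  "self_maps X = (\<Pi>\<^sub>E z\<in>UNIV. if z \<in> X then X else {z})"

definition iter_on :: "'a set \<Rightarrow> ('a \<Rightarrow> 'a) \<Rightarrow> nat \<Rightarrow> 'a \<Rightarrow> 'a" where
  "iter_on X T n z = (if z \<in> X then (T ^^ n) z else z)"

lemma mem_self_maps: "f \<in> self_maps X \<longleftrightarrow> (\<forall>z. f z \<in> (if z \<in> X then X else {z}))"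
  by (simp add: self_maps_def PiE_iff)

lemma compact_self_maps:
  fixes X :: "'a::topological_space set"
  assumes "compact X"
  shows "compact (self_maps X)"
proof -
  have "compactin (product_topology (\<lambda>_. euclidean) UNIV) (self_maps X)"
    unfolding self_maps_def compactin_PiE using assms by auto
  then show ?thesis by (simp add: euclidean_product_topology)
qed

lemma iter_on_in_self_maps: "T ` X \<subseteq> X \<Longrightarrow> iter_on X T n \<in> self_maps X"
  using funpow_mapsto by (auto simp: mem_self_maps iter_on_def)

lemma iter_on_add:
  assumes "T ` X \<subseteq> X"
  shows "iter_on X T s \<circ> iter_on X T t = iter_on X T (s + t)"
  by (auto simp: iter_on_def fun_eq_iff funpow_add funpow_mapsto[OF assms])

lemma continuous_on_iter_on_comp:
  assumes cont: "continuous_on X T" and TX: "T ` X \<subseteq> X"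
  shows "continuous_on (self_maps X) (\<lambda>h. iter_on X T s \<circ> h)"
proof (intro continuous_on_coordinatewise_then_product)
  fix i
  show "continuous_on (self_maps X) (\<lambda>h. (iter_on X T s \<circ> h) i)"
  proof (cases "i \<in> X")
    case True
    then have in_X: "h i \<in> X" if "h \<in> self_maps X" for h
      using that by (auto simp: mem_self_maps dest: spec[of _ i])
    have "continuous_on (self_maps X) (\<lambda>h. (T ^^ s) (h i))"
      by (rule continuous_on_compose2[OF continuous_on_funpow[OF cont TX]])
         (auto intro: continuous_on_subset[OF continuous_on_product_coordinates] in_X)
    then show ?thesis
      by (rule continuous_on_cong[THEN iffD1, rotated 2]) (auto simp: iter_on_def in_X)
  next
    case False
    then have fixed: "h i = i" if "h \<in> self_maps X" for h
      using that by (auto simp: mem_self_maps dest: spec[of _ i])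
    have "continuous_on (self_maps X) (\<lambda>h. i)" by (rule continuous_on_const)
    then show ?thesis
      by (rule continuous_on_cong[THEN iffD1, rotated 2]) (auto simp: iter_on_def False fixed)
  qed
qed

definition IP_limits ::
    "'a::topological_space set \<Rightarrow> ('a \<Rightarrow> 'a) \<Rightarrow> (nat \<Rightarrow> nat) \<Rightarrow> ('a \<Rightarrow> 'a) set" where
  "IP_limits X T p = (\<Inter>j. closure (iter_on X T ` IP_tail p j))"

lemma closure_iter_on_subset_self_maps:
  fixes X :: "'a::t2_space set"
  assumes "compact X" "T ` X \<subseteq> X"
  shows "closure (iter_on X T ` S) \<subseteq> self_maps X"
  by (rule closure_minimal)
     (use iter_on_in_self_maps[OF assms(2)] compact_imp_closed_fun[OF compact_self_maps[OF assms(1)]]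
      in auto)

lemma compact_IP_limits:
  fixes X :: "'a::t2_space set"
  assumes "compact X" "T ` X \<subseteq> X"
  shows "compact (IP_limits X T p)"
proof -
  have "IP_limits X T p \<subseteq> self_maps X"
    using closure_iter_on_subset_self_maps[OF assms] by (auto simp: IP_limits_def)
  moreover have "closed (IP_limits X T p)" by (auto simp: IP_limits_def)
  then have "compact (self_maps X \<inter> IP_limits X T p)"
    by (rule compact_Int_closed[OF compact_self_maps[OF assms(1)]])
  ultimately show ?thesis by (simp add: Int_absorb1)
qed

lemma IP_limits_nonempty:
  fixes X :: "'a::t2_space set"
  assumes "compact X" "T ` X \<subseteq> X" "\<forall>i. p i > 0"
  shows "IP_limits X T p \<noteq> {}"
proof -
  define C where "C j = closure (iter_on X T ` IP_tail p j)" for j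
  have C_antimono: "C k \<subseteq> C j" if "j \<le> k" for j k
    unfolding C_def by (intro closure_mono image_mono IP_tail_antimono that)
  have "\<Inter>(range C) \<noteq> {}"
  proof (rule compact_Inter_chain_nonempty[OF compact_self_maps[OF assms(1)]])
    show "closed S \<and> S \<noteq> {} \<and> S \<subseteq> self_maps X" if "S \<in> range C" for S
      using that IP_tail_nonempty[OF assms(3)] closure_iter_on_subset_self_maps[OF assms(1,2)]
      by (auto simp: C_def)
    show "S \<subseteq> S' \<or> S' \<subseteq> S" if "S \<in> range C" "S' \<in> range C" for S S'
      using that C_antimono nat_le_linear by blast
  qed simp
  then show ?thesis by (simp add: IP_limits_def C_def)
qed

lemma comp_closed_IP_limits:
  fixes X :: "'a::metric_space set"
  assumes cX: "compact X" and cont: "continuous_on X T" and TX: "T ` X \<subseteq> X"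
  shows "comp_closed (IP_limits X T p)"
  unfolding comp_closed_def
proof (intro ballI)
  define C where "C j = closure (iter_on X T ` IP_tail p j)" for j
  have C_self_maps: "C j \<subseteq> self_maps X" for j
    unfolding C_def by (rule closure_iter_on_subset_self_maps[OF cX TX])
  fix f g assume f: "f \<in> IP_limits X T p" and g: "g \<in> IP_limits X T p"
  have "f \<circ> g \<in> C j" for j
  proof -
    have "iter_on X T s \<circ> g \<in> C j" if s: "s \<in> IP_tail p j" for s
    proof -
      obtain N where N: "\<And>t. t \<in> IP_tail p N \<Longrightarrow> s + t \<in> IP_tail p j"
        using IP_tail_add[OF s] by blast
      have "(\<lambda>h. iter_on X T s \<circ> h) ` C N \<subseteq> C j"
        unfolding C_def
      proof (rule image_closure_subset)
        show "continuous_on (closure (iter_on X T ` IP_tail p N)) (\<lambda>h. iter_on X T s \<circ> h)"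
          using continuous_on_subset[OF continuous_on_iter_on_comp[OF cont TX] C_self_maps]
          by (simp add: C_def)
        show "(\<lambda>h. iter_on X T s \<circ> h) ` iter_on X T ` IP_tail p N
            \<subseteq> closure (iter_on X T ` IP_tail p j)"
          using N closure_subset by (fastforce simp: iter_on_add[OF TX])
      qed simp
      moreover have "g \<in> C N" using g by (simp add: IP_limits_def C_def)
      ultimately show ?thesis by blast
    qed
    then have "(\<lambda>h. h \<circ> g) ` C j \<subseteq> C j"
      unfolding C_def by (intro image_closure_subset continuous_on_comp_right) (auto simp: C_def)
    moreover have "f \<in> C j" using f by (simp add: IP_limits_def C_def)
    ultimately show ?thesis by blast
  qed
  then show "f \<circ> g \<in> IP_limits X T p" by (simp add: IP_limits_def C_def)
qed

lemma exists_idempotent_IP_limit: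
  fixes X :: "'a::metric_space set"
  assumes "tds X T" "\<forall>i. p i > 0"
  obtains u where "u \<in> IP_limits X T p" "u \<circ> u = u"
proof -
  have cX: "compact X" and cont: "continuous_on X T" and TX: "T ` X \<subseteq> X"
    using assms(1) by (auto simp: tds_def)
  show thesis
    by (rule compact_comp_closed_has_idempotent[OF compact_IP_limits[OF cX TX]
          IP_limits_nonempty[OF cX TX assms(2)] comp_closed_IP_limits[OF cX cont TX]]) (rule that)
qed

lemma IP_limit_approx:
  fixes X :: "'a::metric_space set"
  assumes u: "u \<in> IP_limits X T p" and I: "finite I" "I \<subseteq> X" and e: "e > 0"
  obtains s where "N \<le> s" "s \<in> FS p" "\<And>i. i \<in> I \<Longrightarrow> dist ((T ^^ s) i) (u i) < e"
proof -
  define W where "W = {f. \<forall>i\<in>I. f (id i) \<in> ball (u i) e}"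
  have "open W" unfolding W_def by (rule product_topology_basis') (auto simp: I)
  moreover have "u \<in> W" using e by (simp add: W_def)
  moreover have "u \<in> closure (iter_on X T ` IP_tail p N)" using u by (simp add: IP_limits_def)
  ultimately have "W \<inter> iter_on X T ` IP_tail p N \<noteq> {}"
    using open_Int_closure_eq_empty by blast
  then obtain s where s: "s \<in> IP_tail p N" "iter_on X T s \<in> W" by blast
  show thesis
  proof (rule that)
    show "N \<le> s" "s \<in> FS p" using s(1) IP_tail_ge IP_tail_subset_FS by blast+
    show "dist ((T ^^ s) i) (u i) < e" if i: "i \<in> I" for i
    proof -
      have "iter_on X T s i \<in> ball (u i) e" using s(2) i by (simp add: W_def)
      moreover have "i \<in> X" using i I(2) by blast
      ultimately show ?thesis by (simp add: iter_on_def dist_commute)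
    qed
  qed
qed

lemma IP_limit_in:
  fixes X :: "'a::metric_space set"
  assumes "tds X T" "u \<in> IP_limits X T p" "x \<in> X"
  shows "u x \<in> X"
proof -
  have "compact X" "T ` X \<subseteq> X" using assms(1) by (auto simp: tds_def)
  moreover have "u \<in> closure (iter_on X T ` IP_tail p 0)" using assms(2) by (simp add: IP_limits_def)
  ultimately have "u \<in> self_maps X" using closure_iter_on_subset_self_maps by blast
  then have "\<forall>z. u z \<in> (if z \<in> X then X else {z})" by (simp add: mem_self_maps)
  then have "u x \<in> (if x \<in> X then X else {x})" ..
  then show ?thesis using assms(3) by simp
qed

lemma strongly_proximal_idempotent_IP_limit:
  fixes X :: "'a::metric_space set"
  assumes "tds X T" "u \<in> IP_limits X T p" "u \<circ> u = u" "x \<in> X"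
  shows "strongly_proximal T x (u x)"
proof (rule strongly_proximalI)
  fix e :: real and N assume e: "e > 0"
  have fin: "finite {x, u x}" by simp
  have sub: "{x, u x} \<subseteq> X" using IP_limit_in[OF assms(1,2,4)] assms(4) by simp
  obtain s where s: "N \<le> s" "s \<in> FS p" "\<And>i. i \<in> {x, u x} \<Longrightarrow> dist ((T ^^ s) i) (u i) < e"
    by (rule IP_limit_approx[where N=N, OF assms(2) fin sub e]) blast
  have "u (u x) = u x" using assms(3) by (simp add: fun_eq_iff)
  then have "dist ((T ^^ s) x) (u x) < e \<and> dist ((T ^^ s) (u x)) (u x) < e"
    using s(3)[of x] s(3)[of "u x"] by simp
  then show "\<exists>n\<ge>N. dist ((T ^^ n) x) (u x) < e \<and> dist ((T ^^ n) (u x)) (u x) < e"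
    using s(1) by (intro exI[of _ s]) simp
qed

lemma IP_limit_dist_ge:
  fixes X :: "'a::metric_space set"
  assumes u: "u \<in> IP_limits X T p" and xy: "x \<in> X" "y \<in> X"
    and separated: "FS p \<subseteq> {n. dist ((T ^^ n) x) ((T ^^ n) y) > \<delta>}"
  shows "\<delta> \<le> dist (u x) (u y)"
proof (rule field_le_epsilon)
  fix e :: real assume "e > 0"
  then obtain s where s: "s \<in> FS p" "\<And>i. i \<in> {x, y} \<Longrightarrow> dist ((T ^^ s) i) (u i) < e/2"
    using IP_limit_approx[OF u, of "{x, y}" "e/2" 0] xy by auto
  have "dist ((T ^^ s) x) ((T ^^ s) y)
      \<le> dist ((T ^^ s) x) (u x) + dist (u x) (u y) + dist ((T ^^ s) y) (u y)"
    using dist_triangle[of "(T ^^ s) x" "(T ^^ s) y" "u x"] dist_triangle[of "u x" "(T ^^ s) y" "u y"]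
    by (simp add: dist_commute)
  moreover have "\<delta> < dist ((T ^^ s) x) ((T ^^ s) y)" using separated s(1) by blast
  moreover have "dist ((T ^^ s) x) (u x) < e/2" "dist ((T ^^ s) y) (u y) < e/2" using s(2) by auto
  ultimately show "\<delta> \<le> dist (u x) (u y) + e" by linarith
qed

lemma proximal_points_if_strongly_F_ip_sensitive:
  fixes X :: "'a::metric_space set"
  assumes tds: "tds X T" and sensitive: "strongly_F_ip_sensitive X T"
  shows "\<exists>\<delta>>0. \<forall>U. openin (top_of_set X) U \<and> U \<noteq> {} \<longrightarrow>
    (\<exists>x\<in>U. \<exists>y\<in>X. dist x y > \<delta> \<and> strongly_proximal T x y)"
proof -
  obtain \<delta> where \<delta>: "\<delta> > 0" and separating: "\<And>U. openin (top_of_set X) U \<and> U \<noteq> {} \<Longrightarrow>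
      \<exists>x\<in>U. \<exists>y\<in>U. {n. dist ((T ^^ n) x) ((T ^^ n) y) > \<delta>} \<in> F_ip"
    using sensitive unfolding strongly_F_ip_sensitive_def by blast
  have "\<exists>x\<in>U. \<exists>z\<in>X. dist x z > \<delta>/4 \<and> strongly_proximal T x z"
    if U: "openin (top_of_set X) U" "U \<noteq> {}" for U
  proof -
    obtain V where V: "openin (top_of_set X) V" "V \<noteq> {}" "V \<subseteq> U"
      and small: "\<And>x y. x \<in> V \<Longrightarrow> y \<in> V \<Longrightarrow> dist x y < \<delta>/2"
      using openin_subset_small[OF U, of "\<delta>/2"] \<delta> by auto
    obtain x y where xy: "x \<in> V" "y \<in> V" and "{n. dist ((T ^^ n) x) ((T ^^ n) y) > \<delta>} \<in> F_ip"
      using separating V(1,2) by blast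
    then obtain p where p: "\<forall>i. p i > 0" "FS p \<subseteq> {n. dist ((T ^^ n) x) ((T ^^ n) y) > \<delta>}"
      unfolding F_ip_def by blast
    obtain u where u: "u \<in> IP_limits X T p" "u \<circ> u = u"
      using exists_idempotent_IP_limit[OF tds p(1)] by blast
    have X: "x \<in> X" "y \<in> X" using xy V(1) openin_imp_subset by blast+
    have "\<delta> \<le> dist (u x) (u y)" using IP_limit_dist_ge[OF u(1) X p(2)] .
    moreover have "dist x y < \<delta>/2" using small[OF xy] .
    moreover have "dist (u x) (u y) \<le> dist x (u x) + dist x y + dist y (u y)"
      using dist_triangle[of "u x" "u y" x] dist_triangle[of x "u y" y] by (simp add: dist_commute)
    ultimately have "dist x (u x) > \<delta>/4 \<or> dist y (u y) > \<delta>/4" by linarith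
    moreover have "strongly_proximal T x (u x)" "strongly_proximal T y (u y)"
      using strongly_proximal_idempotent_IP_limit[OF tds u] X by blast+
    moreover have "u x \<in> X" "u y \<in> X" using IP_limit_in[OF tds u(1)] X by blast+
    ultimately show ?thesis using xy V(3) by blast
  qed
  then show ?thesis using \<delta> by (intro exI[of _ "\<delta>/4"]) auto
qed

theorem proposition4p15:
  fixes X :: "'a::metric_space set" and T :: "'a \<Rightarrow> 'a"
  assumes "minimal_tds X T"
  shows "strongly_F_ip_sensitive X T \<longleftrightarrow>
    (\<exists>\<delta>>0. \<forall>U. openin (top_of_set X) U \<and> U \<noteq> {} \<longrightarrow>
       (\<exists>x\<in>U. \<exists>y\<in>X. dist x y > \<delta> \<and> strongly_proximal T x y))"
proof
  assume "strongly_F_ip_sensitive X T"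
  moreover have "tds X T" using assms by (simp add: minimal_tds_def)
  ultimately show "\<exists>\<delta>>0. \<forall>U. openin (top_of_set X) U \<and> U \<noteq> {} \<longrightarrow>
      (\<exists>x\<in>U. \<exists>y\<in>X. dist x y > \<delta> \<and> strongly_proximal T x y)"
    by (rule proximal_points_if_strongly_F_ip_sensitive[rotated])
next
  assume "\<exists>\<delta>>0. \<forall>U. openin (top_of_set X) U \<and> U \<noteq> {} \<longrightarrow>
      (\<exists>x\<in>U. \<exists>y\<in>X. dist x y > \<delta> \<and> strongly_proximal T x y)"
  then obtain \<delta> where "\<delta> > 0" "\<And>U. openin (top_of_set X) U \<Longrightarrow> U \<noteq> {} \<Longrightarrow>
      \<exists>x\<in>U. \<exists>y\<in>X. dist x y > \<delta> \<and> strongly_proximal T x y"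
    by blast
  then show "strongly_F_ip_sensitive X T" by (rule strongly_F_ip_sensitiveI[OF assms])
qed

end
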